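(* Consider Algorithm iR2N (described in the context) and suppose (A4) and (A6) hold. For each iteration $k$ with nonzero denominator, let $$\rho_k=\frac{f(x_k)+h(x_k)-f(x_k+s_k)-h(x_k+s_k)}{\varphi(0;x_k)+\psi(0;x_k)-\varphi(s_k;x_k)-\psi(s_k;x_k)},$$ and define $$\eta_1=\hat\eta_1-\frac{4\kappa_f\theta_1\theta_2^2}{(1-\theta_1)\sigma_{\min}},\qquad \eta_2=\hat\eta_2-\frac{4\kappa_f\theta_1\theta_2^2}{(1-\theta_1)\sigma_{\min}}.$$ Then $\eta_1>0$, $\eta_2>0$, and for every $k$: $\hat\rho_k\ge\hat\eta_1\Rightarrow\rho_k\ge\eta_1$, and $\hat\rho_k\ge\hat\eta_2\Rightarrow\rho_k\ge\eta_2$.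
   Context: Setting. $f:\mathbb{R}^n\to\mathbb{R}$ is continuously differentiable, $h:\mathbb{R}^n\to\mathbb{R}\cup\{+\infty\}$ is proper and lower semicontinuous; the problem is $\min_x f(x)+h(x)$. $\|\cdot\|$ is the Euclidean norm (spectral norm for matrices). For each $x$, approximations $\hat f(x)\in\mathbb{R}$ of $f(x)$ and $\hat\nabla f(x)\in\mathbb{R}^n$ of $\nabla f(x)$ are available. For each $x$, $\psi(\cdot;x):\mathbb{R}^n\to\mathbb{R}\cup\{+\infty\}$ is proper, lsc, satisfies $\psi(0;x)=h(x)$ and $\partial\psi(0;x)\subseteq\partial h(x)$ ($\partial$ = limiting subdifferential), and is uniformly prox-bounded: there is $\lambda>0$ such that for every $x$ and every $0<\lambda'<\lambda$, $w\mapsto\psi(w;x)+\tfrac{1}{2\lambda'}\|w\|^2$ is bounded below. Models: $\varphi_{\mathrm{cp}}(s;x)=\hat f(x)+\hat\nabla f(x)^Ts$; $m_{\mathrm{cp}}(s;x,\nu^{-1})=\varphi_{\mathrm{cp}}(s;x)+\tfrac12\nu^{-1}\|s\|^2+\psi(s;x)$; for a symmetric $B(x)\in\mathbb{R}^{n\times n}$, $\varphi(s;x)=\hat f(x)+\hat\nabla f(x)^Ts+\tfrac12 s^TB(x)s$ and $m(s;x,\sigma)=\varphi(s;x)+\tfrac12\sigma\|s\|^2+\psi(s;x)$. Algorithm iR2N. Constants: $\kappa_f,\kappa_\nabla>0$, $0<\gamma_3\le 1<\gamma_1\le\gamma_2$, $0<\hat\eta_1\le\hat\eta_2<1$, $0<\theta_1<1<\theta_2$,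 $\sigma_{\min}>4\kappa_f\theta_1\theta_2^2/(\hat\eta_1(1-\theta_1))$, $\sigma_0\ge\sigma_{\min}$, $x_0\in\mathbb{R}^n$. At iteration $k=0,1,\dots$: choose symmetric $B_k=B(x_k)$; set $\nu_k=\theta_1/(\|B_k\|+\sigma_k)$; compute $\hat s_{k,\mathrm{cp}}$ with $m_{\mathrm{cp}}(\hat s_{k,\mathrm{cp}};x_k,\nu_k^{-1})\le m_{\mathrm{cp}}(0;x_k,\nu_k^{-1})$ (an approximate minimizer of $m_{\mathrm{cp}}(\cdot;x_k,\nu_k^{-1})$ obtained by a descent procedure from $s=0$) and set $\hat\xi_{k,\mathrm{cp}}=(\varphi_{\mathrm{cp}}+\psi)(0;x_k)-(\varphi_{\mathrm{cp}}+\psi)(\hat s_{k,\mathrm{cp}};x_k)$; compute $s_k$ with $m(s_k;x_k,\sigma_k)\le m(\hat s_{k,\mathrm{cp}};x_k,\sigma_k)$; if $\|s_k\|>\theta_2\|\hat s_{k,\mathrm{cp}}\|$, reset $s_k=\hat s_{k,\mathrm{cp}}$ (these computations are repeated with refined $\hat f,\hat\nabla f$ until (A6) holds). Compute $$\hat\rho_k=\frac{\hat f(x_k)+h(x_k)-\hat f(x_k+s_k)-h(x_k+s_k)}{\varphi(0;x_k)+\psi(0;x_k)-\varphi(s_k;x_k)-\psi(s_k;x_k)},$$ where $\varphi(\cdot;x_k)$ uses $B_k$. If $\hat\rho_k\ge\hat\eta_1$ (successful) set $x_{k+1}=x_k+s_k$, else $x_{k+1}=x_k$. Choose $\sigma_{k+1}\in[\gamma_3\sigma_k,\sigma_k]$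 if $\hat\rho_k\ge\hat\eta_2$ (very successful), $\sigma_{k+1}\in[\sigma_k,\gamma_1\sigma_k]$ if $\hat\eta_1\le\hat\rho_k<\hat\eta_2$, $\sigma_{k+1}\in[\gamma_1\sigma_k,\gamma_2\sigma_k]$ if $\hat\rho_k<\hat\eta_1$; then reset $\sigma_{k+1}=\max(\sigma_{k+1},\sigma_{\min})$. Assumptions. (A4) For all $k$, $\varphi(0;x_k)+\psi(0;x_k)-(\varphi(s_k;x_k)+\psi(s_k;x_k))\ge(1-\theta_1)\hat\xi_{k,\mathrm{cp}}$. (A6) For all $k$: $|f(x_k)-\hat f(x_k)|\le\kappa_f\|s_k\|^2$, $|f(x_k+s_k)-\hat f(x_k+s_k)|\le\kappa_f\|s_k\|^2$, $\|\nabla f(x_k)-\hat\nabla f(x_k)\|\le\kappa_\nabla\|s_k\|$. *)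

theory Defs
  imports "HOL-Analysis.Analysis"
begin

definition lsc_fun :: "('a::topological_space \<Rightarrow> ereal) \<Rightarrow> bool" where
  "lsc_fun g \<longleftrightarrow> (\<forall>x. g x \<le> Liminf (at x) g)"

definition proper_fun :: "('a \<Rightarrow> ereal) \<Rightarrow> bool" where
  "proper_fun g \<longleftrightarrow> (\<forall>x. g x \<noteq> -\<infinity>) \<and> (\<exists>x. g x \<noteq> \<infinity>)"

definition frechet_subdiff :: "('a::real_inner \<Rightarrow> ereal) \<Rightarrow> 'a \<Rightarrow> 'a set" where
  "frechet_subdiff g x = {v. \<bar>g x\<bar> \<noteq> \<infinity> \<and>
     (\<forall>e>0. eventually (\<lambda>y. g y \<ge> g x + ereal (v \<bullet> (y - x) - e * norm (y - x))) (at x))}"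

definition limiting_subdiff :: "('a::real_inner \<Rightarrow> ereal) \<Rightarrow> 'a \<Rightarrow> 'a set" where
  "limiting_subdiff g x = {v. \<exists>xs vs. xs \<longlonglongrightarrow> x \<and> (\<lambda>j. g (xs j)) \<longlonglongrightarrow> g x \<and>
     (\<forall>j. vs j \<in> frechet_subdiff g (xs j)) \<and> vs \<longlonglongrightarrow> v}"

text \<open>Uniform prox-boundedness of the family psi(.;x) (psi x w stands for psi(w;x)).\<close>
definition unif_prox_bounded :: "('a \<Rightarrow> 'a::real_normed_vector \<Rightarrow> ereal) \<Rightarrow> bool" where
  "unif_prox_bounded psi \<longleftrightarrow> (\<exists>lam>0. \<forall>x lam'. 0 < lam' \<and> lam' < lam \<longrightarrow>
      bdd_below (range (\<lambda>w. psi x w + ereal (norm w ^ 2 / (2 * lam')))))"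

end

theory Submission
  imports Defs
begin

text \<open>Since the Cauchy step decreases its model, the Cauchy decrease is at least
  \<open>\<sigma>\<^sub>k \<parallel>s\<^sub>c\<^sub>p\<parallel>\<^sup>2 / (2 \<theta>\<^sub>1)\<close>; by (A4) and
  \<open>\<parallel>s\<^sub>k\<parallel> \<le> \<theta>\<^sub>2 \<parallel>s\<^sub>c\<^sub>p\<parallel>\<close> the common denominator of the exact and the
  estimated ratio is therefore at least
  \<open>(1 - \<theta>\<^sub>1) \<sigma>\<^sub>m\<^sub>i\<^sub>n \<parallel>s\<^sub>k\<parallel>\<^sup>2 / (2 \<theta>\<^sub>1 \<theta>\<^sub>2\<^sup>2)\<close>.
  By (A6) their numerators differ by at most \<open>2 \<kappa>\<^sub>f \<parallel>s\<^sub>k\<parallel>\<^sup>2\<close>, so the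
  ratios differ by at most \<open>4 \<kappa>\<^sub>f \<theta>\<^sub>1 \<theta>\<^sub>2\<^sup>2 / ((1 - \<theta>\<^sub>1) \<sigma>\<^sub>m\<^sub>i\<^sub>n)\<close>,
  a margin that the choice of \<open>\<sigma>\<^sub>m\<^sub>i\<^sub>n\<close> keeps below the thresholds.\<close>

lemma div_lt_of_gt_div:
  fixes c eta alpha sigma :: real
  assumes "0 < c" "0 < eta" "0 < alpha" "c / (eta * alpha) < sigma"
  shows "c / (alpha * sigma) < eta"
proof -
  have "0 < sigma" using assms by (smt (verit) divide_pos_pos mult_pos_pos)
  then show ?thesis using assms by (simp add: field_simps)
qed

lemma perturbed_ratio_lower_bound:
  fixes N N' D e :: real
  assumes "0 < D" "\<bar>N' - N\<bar> \<le> e * D"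
  shows "N / D - e \<le> N' / D"
proof -
  have "N / D - e = (N - e * D) / D" using assms(1) by (simp add: field_simps)
  also have "\<dots> \<le> N' / D" using assms by (intro divide_right_mono) auto
  finally show ?thesis .
qed

lemma estimation_error_le_margin:
  fixes kf th1 th2 smin sigma normB ns ncp :: real
  assumes "0 \<le> kf" "0 < th1" "th1 < 1" "0 < smin" "smin \<le> sigma" "0 \<le> normB"
    and "0 \<le> ns" "ns \<le> th2 * ncp"
  shows "2 * kf * ns ^ 2
    \<le> 4 * kf * th1 * th2 ^ 2 / ((1 - th1) * smin) * ((1 - th1) * ((normB + sigma) / th1 * ncp ^ 2 / 2))"
proof -
  have "1 \<le> (normB + sigma) / smin" using assms(4-6) by simp
  moreover have "ns ^ 2 \<le> (th2 * ncp) ^ 2" using assms(7,8) by (simp add: power_mono)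
  ultimately have "ns ^ 2 \<le> (th2 * ncp) ^ 2 * ((normB + sigma) / smin)"
    by (smt (verit) mult_le_cancel_left1 zero_le_power2)
  then have "2 * kf * ns ^ 2 \<le> 2 * kf * ((th2 * ncp) ^ 2 * ((normB + sigma) / smin))"
    using assms(1) by (intro mult_left_mono) auto
  also have "\<dots>
      = 4 * kf * th1 * th2 ^ 2 / ((1 - th1) * smin) * ((1 - th1) * ((normB + sigma) / th1 * ncp ^ 2 / 2))"
  proof -
    have "1 - th1 \<noteq> 0" "th1 \<noteq> 0" "smin \<noteq> 0" using assms(2-4) by auto
    then show ?thesis by (simp add: field_simps power_mult_distrib)
  qed
  finally show ?thesis .
qed

lemma model_decrease_lower_bound:
  fixes hx psi_cp psi_s :: ereal and u l q m theta :: real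
  assumes "\<bar>hx\<bar> \<noteq> \<infinity>" "psi_cp \<noteq> -\<infinity>" "psi_s \<noteq> -\<infinity>"
    and cp: "ereal (l + q) + psi_cp \<le> ereal u + hx"
    and decrease: "ereal theta * ((ereal u + hx) - (ereal l + psi_cp)) \<le> (ereal u + hx) - (ereal m + psi_s)"
    and "0 \<le> theta"
  obtains D where "(ereal u + hx) - (ereal m + psi_s) = ereal D" "theta * q \<le> D"
proof -
  obtain a where a: "hx = ereal a" using assms(1) by (cases hx) auto
  obtain c where c: "psi_cp = ereal c" using assms(2) cp a by (cases psi_cp) auto
  obtain d where d: "psi_s = ereal d" using assms(3) decrease a c by (cases psi_s) auto
  have "theta * q \<le> theta * (u + a - (l + c))"
    using cp a c \<open>0 \<le> theta\<close> by (simp add: mult_left_mono)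
  also have "\<dots> \<le> u + a - (m + d)" using decrease a c d by simp
  finally show ?thesis using that a d by simp
qed

text \<open>One iteration: \<open>fhx\<close>, \<open>fhxs\<close> are the estimates and \<open>fx\<close>, \<open>fxs\<close>
  the exact values of \<open>f\<close> at \<open>x\<^sub>k\<close> and \<open>x\<^sub>k + s\<^sub>k\<close>; \<open>g_cp\<close> is the
  estimated gradient applied to \<open>s\<^sub>c\<^sub>p\<close>; \<open>phi_s = \<phi>(s\<^sub>k; x\<^sub>k)\<close>;
  \<open>psi_cp\<close>, \<open>psi_s\<close> are \<open>\<psi>(\<cdot>; x\<^sub>k)\<close> at \<open>s\<^sub>c\<^sub>p\<close> and \<open>s\<^sub>k\<close>;
  \<open>ncp\<close>, \<open>ns\<close>, \<open>normB\<close> are the norms of \<open>s\<^sub>c\<^sub>p\<close>, \<open>s\<^sub>k\<close> and \<open>B\<^sub>k\<close>.\<close>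

lemma successful_ratio_lower_bound:
  fixes hx hxs psi_cp psi_s :: ereal
    and fx fxs fhx fhxs g_cp phi_s normB sigma ns ncp kf th1 th2 smin eta :: real
  assumes cp: "ereal (fhx + g_cp + (normB + sigma) / th1 * ncp ^ 2 / 2) + psi_cp \<le> ereal fhx + hx"
    and decrease: "ereal (1 - th1) * ((ereal fhx + hx) - (ereal (fhx + g_cp) + psi_cp))
      \<le> (ereal fhx + hx) - (ereal phi_s + psi_s)"
    and err: "\<bar>fx - fhx\<bar> \<le> kf * ns ^ 2" "\<bar>fxs - fhxs\<bar> \<le> kf * ns ^ 2"
    and finite: "hx \<noteq> \<infinity>" "hx \<noteq> -\<infinity>" "hxs \<noteq> \<infinity>" "hxs \<noteq> -\<infinity>"
      "psi_cp \<noteq> -\<infinity>" "psi_s \<noteq> -\<infinity>"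
    and nonzero: "(ereal fhx + hx) - (ereal phi_s + psi_s) \<noteq> 0"
    and params: "0 \<le> kf" "0 < th1" "th1 < 1" "0 < smin" "smin \<le> sigma" "0 \<le> normB"
    and step: "0 \<le> ns" "ns \<le> th2 * ncp"
    and successful: "ereal eta
      \<le> ((ereal fhx + hx) - (ereal fhxs + hxs)) / ((ereal fhx + hx) - (ereal phi_s + psi_s))"
  shows "eta - 4 * kf * th1 * th2 ^ 2 / ((1 - th1) * smin)
    \<le> (fx + real_of_ereal hx - fxs - real_of_ereal hxs)
      / real_of_ereal ((ereal fhx + hx) - (ereal phi_s + psi_s))"
proof -
  define e where "e = 4 * kf * th1 * th2 ^ 2 / ((1 - th1) * smin)"
  define q where "q = (normB + sigma) / th1 * ncp ^ 2 / 2"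
  obtain a b where a: "hx = ereal a" and b: "hxs = ereal b"
    using finite(1-4) by (cases hx; cases hxs) auto
  obtain D where D: "(ereal fhx + hx) - (ereal phi_s + psi_s) = ereal D" "(1 - th1) * q \<le> D"
    using model_decrease_lower_bound[OF _ finite(5,6) cp decrease] params finite(1,2)
    unfolding q_def by auto
  have "0 \<le> (1 - th1) * q" unfolding q_def using params by simp
  with D nonzero have D_pos: "0 < D" by auto
  have "\<bar>(fx + a - fxs - b) - (fhx + a - fhxs - b)\<bar> \<le> 2 * kf * ns ^ 2" using err by linarith
  also have "\<dots> \<le> e * ((1 - th1) * q)"
    unfolding e_def q_def using estimation_error_le_margin params step by blast
  also have "\<dots> \<le> e * D"
    using D(2) params unfolding e_def by (intro mult_left_mono) auto
  finally have "(fhx + a - fhxs - b) / D - e \<le> (fx + a - fxs - b) / D"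
    using D_pos by (intro perturbed_ratio_lower_bound)
  moreover have "eta \<le> (fhx + a - fhxs - b) / D"
    using successful a b D(1) D_pos by (simp add: diff_diff_eq)
  ultimately show ?thesis unfolding e_def using a b D(1) by simp
qed

theorem lemma3p4:
  fixes f :: "real ^ 'n \<Rightarrow> real" and gradf :: "real ^ 'n \<Rightarrow> real ^ 'n"
    and h :: "real ^ 'n \<Rightarrow> ereal"
    and psi :: "real ^ 'n \<Rightarrow> real ^ 'n \<Rightarrow> ereal"
    and Bf :: "real ^ 'n \<Rightarrow> real ^ 'n ^ 'n"
    and fh :: "nat \<Rightarrow> real ^ 'n \<Rightarrow> real" and gh :: "nat \<Rightarrow> real ^ 'n"
    and x s scp :: "nat \<Rightarrow> real ^ 'n" and sigma :: "nat \<Rightarrow> real"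
    and kf kg gam1 gam2 gam3 eh1 eh2 th1 th2 smin :: real
  assumes f_C1: "\<forall>y. (f has_derivative (\<lambda>v. gradf y \<bullet> v)) (at y)" "continuous_on UNIV gradf"
    and h_proper: "proper_fun h" and h_lsc: "lsc_fun h"
    and psi_proper: "\<forall>y. proper_fun (psi y)" and psi_lsc: "\<forall>y. lsc_fun (psi y)"
    and psi_zero: "\<forall>y. psi y 0 = h y"
    and psi_subdiff: "\<forall>y. limiting_subdiff (psi y) 0 \<subseteq> limiting_subdiff h y"
    and psi_prox: "unif_prox_bounded psi"
    and B_sym: "\<forall>y. transpose (Bf y) = Bf y"
    and params: "kf > 0" "kg > 0" "0 < gam3" "gam3 \<le> 1" "1 < gam1" "gam1 \<le> gam2"
      "0 < eh1" "eh1 \<le> eh2" "eh2 < 1" "0 < th1" "th1 < 1" "1 < th2"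
    and smin: "smin > 4 * kf * th1 * th2 ^ 2 / (eh1 * (1 - th1))"
    and sigma0: "sigma 0 \<ge> smin"
    and cp_decrease: "\<forall>k. ereal (fh k (x k) + gh k \<bullet> scp k
            + (onorm (\<lambda>v. Bf (x k) *v v) + sigma k) / th1 * norm (scp k) ^ 2 / 2) + psi (x k) (scp k)
          \<le> ereal (fh k (x k)) + psi (x k) 0"
    and step: "\<forall>k. (ereal (fh k (x k) + gh k \<bullet> s k + (s k \<bullet> (Bf (x k) *v s k)) / 2
                 + sigma k * norm (s k) ^ 2 / 2) + psi (x k) (s k)
               \<le> ereal (fh k (x k) + gh k \<bullet> scp k + (scp k \<bullet> (Bf (x k) *v scp k)) / 2
                 + sigma k * norm (scp k) ^ 2 / 2) + psi (x k) (scp k)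
             \<and> norm (s k) \<le> th2 * norm (scp k))
          \<or> s k = scp k"
    and x_update: "\<forall>k. x (Suc k) =
          (if ((ereal (fh k (x k)) + h (x k)) - (ereal (fh k (x k + s k)) + h (x k + s k)))
              / ((ereal (fh k (x k)) + psi (x k) 0)
                 - (ereal (fh k (x k) + gh k \<bullet> s k + (s k \<bullet> (Bf (x k) *v s k)) / 2) + psi (x k) (s k)))
              \<ge> ereal eh1
           then x k + s k else x k)"
    and sigma_update: "\<forall>k. \<exists>t. sigma (Suc k) = max t smin \<and>
          (let rh = ((ereal (fh k (x k)) + h (x k)) - (ereal (fh k (x k + s k)) + h (x k + s k)))
              / ((ereal (fh k (x k)) + psi (x k) 0)
                 - (ereal (fh k (x k) + gh k \<bullet> s k + (s k \<bullet> (Bf (x k) *v s k)) / 2) + psi (x k) (s k)))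
           in (rh \<ge> ereal eh2 \<longrightarrow> gam3 * sigma k \<le> t \<and> t \<le> sigma k)
            \<and> (ereal eh1 \<le> rh \<and> rh < ereal eh2 \<longrightarrow> sigma k \<le> t \<and> t \<le> gam1 * sigma k)
            \<and> (rh < ereal eh1 \<longrightarrow> gam1 * sigma k \<le> t \<and> t \<le> gam2 * sigma k))"
    and A4: "\<forall>k. (ereal (fh k (x k)) + psi (x k) 0)
                 - (ereal (fh k (x k) + gh k \<bullet> s k + (s k \<bullet> (Bf (x k) *v s k)) / 2) + psi (x k) (s k))
               \<ge> ereal (1 - th1) *
                 ((ereal (fh k (x k)) + psi (x k) 0)
                  - (ereal (fh k (x k) + gh k \<bullet> scp k) + psi (x k) (scp k)))"
    and A6: "\<forall>k. \<bar>f (x k) - fh k (x k)\<bar> \<le> kf * norm (s k) ^ 2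
              \<and> \<bar>f (x k + s k) - fh k (x k + s k)\<bar> \<le> kf * norm (s k) ^ 2
              \<and> norm (gradf (x k) - gh k) \<le> kg * norm (s k)"
  shows "eh1 - 4 * kf * th1 * th2 ^ 2 / ((1 - th1) * smin) > 0
       \<and> eh2 - 4 * kf * th1 * th2 ^ 2 / ((1 - th1) * smin) > 0
       \<and> (\<forall>k. h (x k) \<noteq> \<infinity> \<and> h (x k + s k) \<noteq> \<infinity> \<and>
              (ereal (fh k (x k)) + psi (x k) 0)
                 - (ereal (fh k (x k) + gh k \<bullet> s k + (s k \<bullet> (Bf (x k) *v s k)) / 2) + psi (x k) (s k)) \<noteq> 0
            \<longrightarrow>
            (let rh = ((ereal (fh k (x k)) + h (x k)) - (ereal (fh k (x k + s k)) + h (x k + s k)))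
                 / ((ereal (fh k (x k)) + psi (x k) 0)
                    - (ereal (fh k (x k) + gh k \<bullet> s k + (s k \<bullet> (Bf (x k) *v s k)) / 2) + psi (x k) (s k)));
                 r = (f (x k) + real_of_ereal (h (x k)) - f (x k + s k) - real_of_ereal (h (x k + s k)))
                 / real_of_ereal ((ereal (fh k (x k)) + psi (x k) 0)
                    - (ereal (fh k (x k) + gh k \<bullet> s k + (s k \<bullet> (Bf (x k) *v s k)) / 2) + psi (x k) (s k)))
             in (rh \<ge> ereal eh1 \<longrightarrow> r \<ge> eh1 - 4 * kf * th1 * th2 ^ 2 / ((1 - th1) * smin))
              \<and> (rh \<ge> ereal eh2 \<longrightarrow> r \<ge> eh2 - 4 * kf * th1 * th2 ^ 2 / ((1 - th1) * smin))))"
proof -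
  have psi_at_0: "psi y 0 = h y" for y using psi_zero by simp
  have h_not_minf: "h y \<noteq> -\<infinity>" and psi_not_minf: "psi y w \<noteq> -\<infinity>" for y w
    using h_proper psi_proper unfolding proper_fun_def by auto
  have smin_pos: "0 < smin"
    using smin params by (smt (verit) divide_pos_pos mult_pos_pos zero_less_power)
  have margin: "4 * kf * th1 * th2 ^ 2 / ((1 - th1) * smin) < eh1"
  proof (rule div_lt_of_gt_div)
    show "0 < 4 * kf * th1 * th2 ^ 2" using params(1,10,12) by simp
  qed (use params smin in auto)
  have sigma_ge: "smin \<le> sigma k" for k
  proof (cases k)
    case (Suc j)
    with sigma_update obtain t where "sigma k = max t smin" by blast
    then show ?thesis by simp
  qed (use sigma0 in simp)
  have step_norm: "norm (s k) \<le> th2 * norm (scp k)" for k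
    using step params(12) by (smt (verit) mult_le_cancel_right1 norm_ge_zero)
  have onorm_nonneg: "0 \<le> onorm (\<lambda>v. Bf y *v v)" for y
    by (rule onorm_pos_le) simp
  have err: "\<bar>f (x k) - fh k (x k)\<bar> \<le> kf * norm (s k) ^ 2"
    "\<bar>f (x k + s k) - fh k (x k + s k)\<bar> \<le> kf * norm (s k) ^ 2" for k
    using A6 by auto
  show ?thesis
    unfolding Let_def psi_at_0
  proof (intro conjI allI impI; (elim conjE)?)
    show "0 < eh1 - 4 * kf * th1 * th2 ^ 2 / ((1 - th1) * smin)"
      "0 < eh2 - 4 * kf * th1 * th2 ^ 2 / ((1 - th1) * smin)"
      using margin params(8) by linarith+
  qed (rule successful_ratio_lower_bound[OF cp_decrease[unfolded psi_at_0, rule_format]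
        A4[unfolded psi_at_0, rule_format] err];
      simp add: h_not_minf psi_not_minf less_imp_le[OF params(1)] params sigma_ge step_norm
        onorm_nonneg smin_pos)+
qed

end
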